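(* Let $0<p<1$ and let $k\ge 1$ be an integer. A coin showing heads with probability $p$ and tails with probability $1-p$ is flipped independently until $\mathrm{H}^k\mathrm{T}$ ($k$ heads followed by a tails) first appears as consecutive flips; let $Y$ be the number of flips. Then \[ E(Y) = \frac{1}{(1-p)p^k},\qquad E(Y^2) = \frac{2}{(1-p)^2 p^{2k}} - \frac{2k+1}{(1-p) p^k}, \] \[ E(Y^3) = \frac{6}{(1-p)^3 p^{3k}} - \frac{12k+6}{(1-p)^2 p^{2k}} + \frac{3k^2+3k+1}{(1-p) p^k}, \] \[ E(Y^4) = \frac{24}{(1-p)^4 p^{4k}} - \frac{72k+36}{(1-p)^3 p^{3k}} + \frac{48k^2+48k+14}{(1-p)^2 p^{2k}} - \frac{4k^3+6k^2+4k+1}{(1-p) p^k}, \] \[ E(Y^5) = \frac{120}{(1-p)^5 p^{5k}} - \frac{240(2k+1)}{(1-p)^4 p^{4k}} + \frac{30(18k^2+18k+5)}{(1-p)^3 p^{3k}} - \frac{10(16k^3+24k^2+14k+3)}{(1-p)^2 p^{2k}} + \frac{(k+1)^5-k^5}{(1-p) p^k}. \] *)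

theory Defs
  imports "HOL-Probability.Probability"
begin

text \<open>Coin flips are modelled as an infinite stream of independent Bernoulli(p) trials,
  True = heads, False = tails. Flip number m (m \<ge> 1) is the stream entry at index m - 1.\<close>

definition coin_space :: "real \<Rightarrow> bool stream measure" where
  "coin_space p = stream_space (measure_pmf (bernoulli_pmf p))"

text \<open>The pattern H^k T is completed at flip n: flips n-k, ..., n-1 are heads and flip n is tails.\<close>
definition pattern_at :: "nat \<Rightarrow> bool stream \<Rightarrow> nat \<Rightarrow> bool" where
  "pattern_at k \<omega> n \<longleftrightarrow> k + 1 \<le> n \<and> (\<forall>i<k. \<omega> !! (n - k - 1 + i)) \<and> \<not> \<omega> !! (n - 1)"

text \<open>Number of flips until H^k T first appears (defined arbitrarily on the null set
  where it never appears).\<close>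
definition waiting_time :: "nat \<Rightarrow> bool stream \<Rightarrow> nat" where
  "waiting_time k \<omega> = (LEAST n. pattern_at k \<omega> n)"

end

theory Submission
  imports Defs
begin

text \<open>Let \<open>q = (1 - p) p\<^sup>k\<close>. The pattern \<open>H\<^sup>kT\<close> cannot overlap itself, so \<open>Y = m + k + 1\<close> exactly
  when no occurrence ends among the first \<open>m\<close> flips and flips \<open>m + 1, \<dots>, m + k + 1\<close> read \<open>H\<^sup>kT\<close>.
  These two events depend on disjoint blocks of flips, hence \<open>P(Y = m + k + 1) = q P(Y > m)\<close>.
  Summing against any \<open>g\<close> gives \<open>E g(Y) = q E (\<Sum>m<Y. g(m + k + 1))\<close>, and for
  \<open>g(n) = (n - k)\<^bsup>j+1\<^esup> - (n - k - 1)\<^bsup>j+1\<^esup>\<close> the inner sum telescopes to \<open>Y\<^bsup>j+1\<^esup>\<close>. Thus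
  \<open>q E(Y\<^bsup>j+1\<^esup>) = E((Y - k)\<^bsup>j+1\<^esup> - (Y - k - 1)\<^bsup>j+1\<^esup>)\<close>, whose right-hand side is a polynomial of
  degree \<open>j\<close> in \<open>Y\<close>: this recursion determines every moment from the lower ones (and, by induction,
  shows they are all finite). That the pattern occurs almost surely follows from the independence of
  the disjoint blocks of \<open>k + 1\<close> flips, each of which reads \<open>H\<^sup>kT\<close> with probability \<open>q\<close>.\<close>

lemma (in prob_space) nn_integral_stream_space_prefix_sdrop:
  assumes [measurable]: "f \<in> borel_measurable (stream_space M)" "h \<in> borel_measurable (stream_space M)"
    and prefix: "\<And>\<omega> \<omega>'. \<omega> \<in> space (stream_space M) \<Longrightarrow> \<omega>' \<in> space (stream_space M) \<Longrightarrow>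
      stake r \<omega> = stake r \<omega>' \<Longrightarrow> f \<omega> = f \<omega>'"
  shows "(\<integral>\<^sup>+\<omega>. f \<omega> * h (sdrop r \<omega>) \<partial>stream_space M)
    = (\<integral>\<^sup>+\<omega>. f \<omega> \<partial>stream_space M) * (\<integral>\<^sup>+\<omega>. h \<omega> \<partial>stream_space M)"
  using assms(1) prefix
proof (induction r arbitrary: f)
  case 0
  interpret S: prob_space "stream_space M" by (rule prob_space_stream_space)
  obtain \<omega>\<^sub>0 where \<omega>\<^sub>0: "\<omega>\<^sub>0 \<in> space (stream_space M)"
    using S.not_empty by blast
  have const: "f \<omega> = f \<omega>\<^sub>0" if "\<omega> \<in> space (stream_space M)" for \<omega>
    using "0.prems"(2)[OF that \<omega>\<^sub>0] by simp
  have "(\<integral>\<^sup>+\<omega>. f \<omega> * h \<omega> \<partial>stream_space M) = (\<integral>\<^sup>+\<omega>. f \<omega>\<^sub>0 * h \<omega> \<partial>stream_space M)"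
    "(\<integral>\<^sup>+\<omega>. f \<omega> \<partial>stream_space M) = (\<integral>\<^sup>+\<omega>. f \<omega>\<^sub>0 \<partial>stream_space M)"
    by (simp_all add: const cong: nn_integral_cong)
  then show ?case by (simp add: nn_integral_cmult S.emeasure_space_1)
next
  case (Suc r)
  interpret S: prob_space "stream_space M" by (rule prob_space_stream_space)
  note [measurable] = Suc.prems(1)
  have f_Stream: "(\<lambda>(x, \<omega>). f (x ## \<omega>)) \<in> borel_measurable (M \<Otimes>\<^sub>M stream_space M)"
    by measurable
  have IH: "(\<integral>\<^sup>+\<omega>. f (x ## \<omega>) * h (sdrop r \<omega>) \<partial>stream_space M)
      = (\<integral>\<^sup>+\<omega>. f (x ## \<omega>) \<partial>stream_space M) * (\<integral>\<^sup>+\<omega>. h \<omega> \<partial>stream_space M)"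
    if "x \<in> space M" for x
  proof (rule Suc.IH)
    show "(\<lambda>\<omega>. f (x ## \<omega>)) \<in> borel_measurable (stream_space M)"
      using that by measurable
  next
    fix \<omega> \<omega>' assume "\<omega> \<in> space (stream_space M)" "\<omega>' \<in> space (stream_space M)" "stake r \<omega> = stake r \<omega>'"
    then show "f (x ## \<omega>) = f (x ## \<omega>')"
      using that by (intro Suc.prems(2)) (simp_all add: space_stream_space)
  qed
  have "(\<integral>\<^sup>+\<omega>. f \<omega> * h (sdrop (Suc r) \<omega>) \<partial>stream_space M)
      = (\<integral>\<^sup>+x. (\<integral>\<^sup>+\<omega>. f (x ## \<omega>) * h (sdrop r \<omega>) \<partial>stream_space M) \<partial>M)"
    by (subst nn_integral_stream_space) simp_all
  also have "\<dots> = (\<integral>\<^sup>+x. (\<integral>\<^sup>+\<omega>. f (x ## \<omega>) \<partial>stream_space M) * (\<integral>\<^sup>+\<omega>. h \<omega> \<partial>stream_space M) \<partial>M)"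
    by (intro nn_integral_cong) (simp add: IH)
  also have "\<dots> = (\<integral>\<^sup>+x. (\<integral>\<^sup>+\<omega>. f (x ## \<omega>) \<partial>stream_space M) \<partial>M) * (\<integral>\<^sup>+\<omega>. h \<omega> \<partial>stream_space M)"
    by (intro nn_integral_multc S.borel_measurable_nn_integral f_Stream)
  also have "(\<integral>\<^sup>+x. (\<integral>\<^sup>+\<omega>. f (x ## \<omega>) \<partial>stream_space M) \<partial>M) = (\<integral>\<^sup>+\<omega>. f \<omega> \<partial>stream_space M)"
    by (subst nn_integral_stream_space) simp_all
  finally show ?case .
qed

lemma (in prob_space) emeasure_stream_space_prefix_sdrop:
  assumes [measurable]: "A \<in> sets (stream_space M)" "B \<in> sets (stream_space M)"
    and prefix: "\<And>\<omega> \<omega>'. \<omega> \<in> space (stream_space M) \<Longrightarrow> \<omega>' \<in> space (stream_space M) \<Longrightarrow>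
      stake r \<omega> = stake r \<omega>' \<Longrightarrow> \<omega> \<in> A \<longleftrightarrow> \<omega>' \<in> A"
  shows "emeasure (stream_space M) (A \<inter> sdrop r -` B)
    = emeasure (stream_space M) A * emeasure (stream_space M) B"
proof -
  have "A \<inter> sdrop r -` B = A \<inter> (sdrop r -` B \<inter> space (stream_space M))"
    using sets.sets_into_space[OF assms(1)] by auto
  also have "\<dots> \<in> sets (stream_space M)" by measurable
  finally have "emeasure (stream_space M) (A \<inter> sdrop r -` B)
      = (\<integral>\<^sup>+\<omega>. indicator (A \<inter> sdrop r -` B) \<omega> \<partial>stream_space M)"
    by simp
  also have "\<dots> = (\<integral>\<^sup>+\<omega>. indicator A \<omega> * indicator B (sdrop r \<omega>) \<partial>stream_space M)"
    by (intro nn_integral_cong) (simp split: split_indicator)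
  also have "\<dots> = (\<integral>\<^sup>+\<omega>. indicator A \<omega> \<partial>stream_space M) * (\<integral>\<^sup>+\<omega>. indicator B \<omega> \<partial>stream_space M)"
  proof (rule nn_integral_stream_space_prefix_sdrop)
    fix \<omega> \<omega>' assume "\<omega> \<in> space (stream_space M)" "\<omega>' \<in> space (stream_space M)" "stake r \<omega> = stake r \<omega>'"
    then show "indicator A \<omega> = (indicator A \<omega>' :: ennreal)"
      using prefix[of \<omega> \<omega>'] by (simp split: split_indicator)
  qed simp_all
  finally show ?thesis by simp
qed

lemma (in prob_space) emeasure_stream_space_shd:
  assumes [measurable]: "A \<in> sets M"
  shows "emeasure (stream_space M) (shd -` A \<inter> space (stream_space M)) = emeasure M A"
proof -
  interpret S: prob_space "stream_space M" by (rule prob_space_stream_space)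
  have "emeasure (stream_space M) (shd -` A \<inter> space (stream_space M))
      = (\<integral>\<^sup>+t. emeasure (stream_space M) {\<omega> \<in> space (stream_space M). t ## \<omega> \<in> shd -` A \<inter> space (stream_space M)} \<partial>M)"
    by (rule emeasure_stream_space) measurable
  also have "\<dots> = (\<integral>\<^sup>+t. indicator A t \<partial>M)"
  proof (intro nn_integral_cong)
    fix t assume "t \<in> space M"
    then have "{\<omega> \<in> space (stream_space M). t ## \<omega> \<in> shd -` A \<inter> space (stream_space M)}
        = (if t \<in> A then space (stream_space M) else {})"
      by (auto simp: space_stream_space)
    then show "emeasure (stream_space M) {\<omega> \<in> space (stream_space M). t ## \<omega> \<in> shd -` A \<inter> space (stream_space M)}
        = indicator A t"
      by (simp add: S.emeasure_space_1)
  qed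
  also have "\<dots> = emeasure M A"
    using assms by (rule nn_integral_indicator)
  finally show ?thesis .
qed

lemma nn_integral_comp_nat_valued:
  fixes g :: "nat \<Rightarrow> ennreal"
  assumes [measurable]: "X \<in> M \<rightarrow>\<^sub>M count_space UNIV"
  shows "(\<integral>\<^sup>+\<omega>. g (X \<omega>) \<partial>M) = (\<Sum>n. g n * emeasure M {\<omega>\<in>space M. X \<omega> = n})"
proof -
  have "(\<integral>\<^sup>+\<omega>. g (X \<omega>) \<partial>M) = (\<integral>\<^sup>+\<omega>. (\<Sum>n. g n * indicator {\<omega>\<in>space M. X \<omega> = n} \<omega>) \<partial>M)"
  proof (intro nn_integral_cong)
    fix \<omega> assume "\<omega> \<in> space M"
    then have "(\<Sum>n. g n * indicator {\<omega>\<in>space M. X \<omega> = n} \<omega>) = (\<Sum>n\<in>{X \<omega>}. g n * indicator {\<omega>\<in>space M. X \<omega> = n} \<omega>)"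
      by (intro suminf_finite) (auto split: split_indicator)
    with \<open>\<omega> \<in> space M\<close> show "g (X \<omega>) = (\<Sum>n. g n * indicator {\<omega>\<in>space M. X \<omega> = n} \<omega>)"
      by simp
  qed
  also have "\<dots> = (\<Sum>n. g n * emeasure M {\<omega>\<in>space M. X \<omega> = n})"
    by (simp add: nn_integral_suminf nn_integral_cmult_indicator)
  finally show ?thesis .
qed

lemma nn_integral_sum_lessThan_nat_valued:
  fixes g :: "nat \<Rightarrow> ennreal"
  assumes [measurable]: "X \<in> M \<rightarrow>\<^sub>M count_space UNIV"
  shows "(\<integral>\<^sup>+\<omega>. (\<Sum>m<X \<omega>. g m) \<partial>M) = (\<Sum>m. g m * emeasure M {\<omega>\<in>space M. m < X \<omega>})"
proof -
  have "(\<integral>\<^sup>+\<omega>. (\<Sum>m<X \<omega>. g m) \<partial>M) = (\<integral>\<^sup>+\<omega>. (\<Sum>m. g m * indicator {\<omega>\<in>space M. m < X \<omega>} \<omega>) \<partial>M)"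
  proof (intro nn_integral_cong)
    fix \<omega> assume "\<omega> \<in> space M"
    then have "(\<Sum>m. g m * indicator {\<omega>\<in>space M. m < X \<omega>} \<omega>) = (\<Sum>m<X \<omega>. g m * indicator {\<omega>\<in>space M. m < X \<omega>} \<omega>)"
      by (intro suminf_finite) (auto split: split_indicator)
    with \<open>\<omega> \<in> space M\<close> show "(\<Sum>m<X \<omega>. g m) = (\<Sum>m. g m * indicator {\<omega>\<in>space M. m < X \<omega>} \<omega>)"
      by simp
  qed
  also have "\<dots> = (\<Sum>m. g m * emeasure M {\<omega>\<in>space M. m < X \<omega>})"
    by (simp add: nn_integral_suminf nn_integral_cmult_indicator)
  finally show ?thesis .
qed

lemma sum_lessThan_Suc_power_diff: "(\<Sum>m<n. Suc m ^ Suc j - m ^ Suc j) = n ^ Suc j"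
proof (induction n)
  case (Suc n)
  have "n ^ Suc j \<le> Suc n ^ Suc j" by (rule power_mono) simp_all
  with Suc show ?case by simp
qed simp

lemma Suc_power_diff_le: "Suc a ^ Suc j - a ^ Suc j \<le> Suc j * Suc a ^ j"
proof (induction j)
  case (Suc j)
  have "Suc a ^ Suc (Suc j) = Suc a * Suc a ^ Suc j" by simp
  also have "\<dots> \<le> Suc a * (a ^ Suc j + Suc j * Suc a ^ j)"
    using Suc by (intro mult_left_mono) simp_all
  also have "\<dots> = a * a ^ Suc j + (a ^ Suc j + Suc j * Suc a ^ Suc j)"
    by (simp add: algebra_simps)
  also have "\<dots> \<le> a ^ Suc (Suc j) + Suc (Suc j) * Suc a ^ Suc j"
  proof -
    have "a ^ Suc j \<le> Suc a ^ Suc j" by (rule power_mono) simp_all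
    moreover have "a ^ Suc (Suc j) = a * a ^ Suc j"
      "Suc (Suc j) * Suc a ^ Suc j = Suc a ^ Suc j + Suc j * Suc a ^ Suc j"
      by simp_all
    ultimately show ?thesis by linarith
  qed
  finally show ?case by simp
qed simp

lemma power_diff_binomial:
  fixes y c :: "'a :: comm_ring_1"
  shows "(y - c) ^ n - (y - c - 1) ^ n
    = (\<Sum>i<n. of_nat (n choose i) * ((- c) ^ (n - i) - (- c - 1) ^ (n - i)) * y ^ i)"
proof -
  have "(y - c) ^ n - (y - c - 1) ^ n = (y + - c) ^ n - (y + (- c - 1)) ^ n"
    by (simp add: algebra_simps)
  also have "\<dots> = (\<Sum>i\<le>n. of_nat (n choose i) * ((- c) ^ (n - i) - (- c - 1) ^ (n - i)) * y ^ i)"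
    by (simp only: binomial_ring sum_subtractf[symmetric]) (simp add: algebra_simps)
  also have "\<dots> = (\<Sum>i<n. of_nat (n choose i) * ((- c) ^ (n - i) - (- c - 1) ^ (n - i)) * y ^ i)"
    by (simp add: lessThan_Suc_atMost[symmetric])
  finally show ?thesis .
qed

lemma pattern_at_sdrop: "k + 1 \<le> n \<Longrightarrow> pattern_at k (sdrop m \<omega>) n \<longleftrightarrow> pattern_at k \<omega> (m + n)"
  unfolding pattern_at_def by (auto simp: sdrop_snth add.commute add.left_commute)

lemma pattern_at_stake_cong:
  assumes "stake r \<omega> = stake r \<omega>'" "n \<le> r"
  shows "pattern_at k \<omega> n \<longleftrightarrow> pattern_at k \<omega>' n"
proof -
  have "\<omega> !! i = \<omega>' !! i" if "i < n" for i
    using assms that by (metis less_le_trans stake_nth)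
  then show ?thesis unfolding pattern_at_def by auto
qed

lemma pattern_at_no_overlap:
  assumes "pattern_at k \<omega> (m + k + 1)" "m < n" "n < m + k + 1"
  shows "\<not> pattern_at k \<omega> n"
proof
  have "\<omega> !! (m + i)" if "i < k" for i
    using assms(1) that unfolding pattern_at_def by simp
  moreover have "m + (n - 1 - m) = n - 1" "n - 1 - m < k"
    using assms(2,3) by auto
  ultimately have "\<omega> !! (n - 1)" by metis
  moreover assume "pattern_at k \<omega> n"
  ultimately show False unfolding pattern_at_def by simp
qed

lemma pattern_at_waiting_time: "pattern_at k \<omega> n \<Longrightarrow> pattern_at k \<omega> (waiting_time k \<omega>)"
  unfolding waiting_time_def by (rule LeastI)

lemma waiting_time_gt:
  assumes "pattern_at k \<omega> n"
  shows "k < waiting_time k \<omega>"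
  using pattern_at_waiting_time[OF assms] unfolding pattern_at_def by simp

lemma less_waiting_time_iff:
  assumes "pattern_at k \<omega> n"
  shows "m < waiting_time k \<omega> \<longleftrightarrow> (\<forall>j\<le>m. \<not> pattern_at k \<omega> j)"
proof
  assume "m < waiting_time k \<omega>"
  then show "\<forall>j\<le>m. \<not> pattern_at k \<omega> j"
    unfolding waiting_time_def by (metis le_less_trans not_less_Least)
next
  assume "\<forall>j\<le>m. \<not> pattern_at k \<omega> j"
  then show "m < waiting_time k \<omega>"
    using pattern_at_waiting_time[OF assms] by (metis not_less)
qed

lemma waiting_time_eq_iff:
  assumes "pattern_at k \<omega> n"
  shows "waiting_time k \<omega> = m + k + 1 \<longleftrightarrow> (\<forall>j\<le>m. \<not> pattern_at k \<omega> j) \<and> pattern_at k \<omega> (m + k + 1)"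
proof
  assume "waiting_time k \<omega> = m + k + 1"
  then show "(\<forall>j\<le>m. \<not> pattern_at k \<omega> j) \<and> pattern_at k \<omega> (m + k + 1)"
    using less_waiting_time_iff[OF assms, of m] pattern_at_waiting_time[OF assms] by auto
next
  assume first: "(\<forall>j\<le>m. \<not> pattern_at k \<omega> j) \<and> pattern_at k \<omega> (m + k + 1)"
  then have "m < waiting_time k \<omega>" "waiting_time k \<omega> \<le> m + k + 1"
    using less_waiting_time_iff[OF assms] unfolding waiting_time_def by (auto intro: Least_le)
  moreover have "\<not> (m < waiting_time k \<omega> \<and> waiting_time k \<omega> < m + k + 1)"
    using pattern_at_no_overlap first pattern_at_waiting_time[OF assms] by blast
  ultimately show "waiting_time k \<omega> = m + k + 1" by linarith
qed

lemma prob_space_coin_space: "prob_space (coin_space p)"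
  unfolding coin_space_def by (rule prob_space.prob_space_stream_space[OF prob_space_measure_pmf])

lemma space_coin_space [simp]: "space (coin_space p) = UNIV"
  by (simp add: coin_space_def space_stream_space)

lemma sets_coin_space [measurable_cong]:
  "sets (coin_space p) = sets (stream_space (count_space UNIV))"
  unfolding coin_space_def by (rule sets_stream_space_cong) simp

lemma sets_coin_space_Collect:
  "Measurable.pred (coin_space p) P \<Longrightarrow> {\<omega>. P \<omega>} \<in> sets (coin_space p)"
  by (simp add: pred_def)

lemma measurable_pattern_at [measurable]: "Measurable.pred (coin_space p) (\<lambda>\<omega>. pattern_at k \<omega> n)"
  unfolding pattern_at_def by measurable

lemma measurable_waiting_time [measurable]: "waiting_time k \<in> coin_space p \<rightarrow>\<^sub>M count_space UNIV"
  unfolding waiting_time_def[abs_def] by measurable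

lemma emeasure_coin_space_prefix_sdrop:
  assumes "Measurable.pred (coin_space p) P" "Measurable.pred (coin_space p) Q"
    and prefix: "\<And>\<omega> \<omega>'. stake r \<omega> = stake r \<omega>' \<Longrightarrow> P \<omega> \<longleftrightarrow> P \<omega>'"
  shows "emeasure (coin_space p) {\<omega>. P \<omega> \<and> Q (sdrop r \<omega>)}
    = emeasure (coin_space p) {\<omega>. P \<omega>} * emeasure (coin_space p) {\<omega>. Q \<omega>}"
proof -
  have "{\<omega>. P \<omega>} \<in> sets (coin_space p)" "{\<omega>. Q \<omega>} \<in> sets (coin_space p)"
    using assms(1,2) by (simp_all add: sets_coin_space_Collect)
  then have "emeasure (coin_space p) ({\<omega>. P \<omega>} \<inter> sdrop r -` {\<omega>. Q \<omega>})
      = emeasure (coin_space p) {\<omega>. P \<omega>} * emeasure (coin_space p) {\<omega>. Q \<omega>}"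
    unfolding coin_space_def
  proof (rule prob_space.emeasure_stream_space_prefix_sdrop[OF prob_space_measure_pmf])
    fix \<omega> \<omega>' :: "bool stream" assume "stake r \<omega> = stake r \<omega>'"
    then show "\<omega> \<in> {\<omega>. P \<omega>} \<longleftrightarrow> \<omega>' \<in> {\<omega>. P \<omega>}"
      using prefix by blast
  qed
  moreover have "{\<omega>. P \<omega> \<and> Q (sdrop r \<omega>)} = {\<omega>. P \<omega>} \<inter> sdrop r -` {\<omega>. Q \<omega>}" by auto
  ultimately show ?thesis by simp
qed

lemma emeasure_coin_space_shd: "emeasure (coin_space p) {\<omega>. shd \<omega> = b} = pmf (bernoulli_pmf p) b"
proof -
  have "emeasure (coin_space p) {\<omega>. shd \<omega> = b}
      = emeasure (stream_space (measure_pmf (bernoulli_pmf p))) (shd -` {b} \<inter> space (stream_space (measure_pmf (bernoulli_pmf p))))"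
    by (simp add: coin_space_def space_stream_space vimage_def)
  also have "\<dots> = emeasure (measure_pmf (bernoulli_pmf p)) {b}"
    by (simp add: prob_space.emeasure_stream_space_shd[OF prob_space_measure_pmf])
  finally show ?thesis by (simp add: emeasure_pmf_single)
qed

lemma emeasure_coin_space_heads:
  assumes "0 \<le> p" "p \<le> 1"
  shows "emeasure (coin_space p) {\<omega>. \<forall>i<n. \<omega> !! i} = ennreal (p ^ n)"
proof (induction n)
  case 0
  show ?case using prob_space.emeasure_space_1[OF prob_space_coin_space] by simp
next
  case (Suc n)
  have heads: "{\<omega>. \<forall>i<Suc n. \<omega> !! i} = {\<omega>. shd \<omega> = True \<and> (\<forall>i<n. sdrop 1 \<omega> !! i)}"
    by (simp add: All_less_Suc2 sdrop_snth)
  have "emeasure (coin_space p) {\<omega>. shd \<omega> = True \<and> (\<forall>i<n. sdrop 1 \<omega> !! i)}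
      = emeasure (coin_space p) {\<omega>. shd \<omega> = True} * emeasure (coin_space p) {\<omega>. \<forall>i<n. \<omega> !! i}"
    by (rule emeasure_coin_space_prefix_sdrop) (auto simp: stake_Suc)
  moreover have "emeasure (coin_space p) {\<omega>. shd \<omega> = True} = ennreal p"
    using emeasure_coin_space_shd[of p True] assms by simp
  ultimately show ?case
    unfolding heads using assms Suc by (simp add: ennreal_mult)
qed

lemma emeasure_coin_space_pattern:
  assumes "0 \<le> p" "p \<le> 1"
  shows "emeasure (coin_space p) {\<omega>. pattern_at k \<omega> (k + 1)} = ennreal ((1 - p) * p ^ k)"
proof -
  have window: "{\<omega>. pattern_at k \<omega> (k + 1)} = {\<omega>. (\<forall>i<k. \<omega> !! i) \<and> shd (sdrop k \<omega>) = False}"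
    unfolding pattern_at_def by auto
  have "emeasure (coin_space p) {\<omega>. (\<forall>i<k. \<omega> !! i) \<and> shd (sdrop k \<omega>) = False}
      = emeasure (coin_space p) {\<omega>. \<forall>i<k. \<omega> !! i} * emeasure (coin_space p) {\<omega>. shd \<omega> = False}"
  proof (rule emeasure_coin_space_prefix_sdrop)
    show "\<And>\<omega> \<omega>'. stake k \<omega> = stake k \<omega>' \<Longrightarrow> (\<forall>i<k. \<omega> !! i) \<longleftrightarrow> (\<forall>i<k. \<omega>' !! i)"
      by (metis stake_nth)
  qed measurable
  then show ?thesis
    unfolding window using assms emeasure_coin_space_shd[of p False]
    by (simp add: emeasure_coin_space_heads ennreal_mult' mult.commute)
qed

locale HkT_waiting_time =
  fixes p :: real and k :: nat
  assumes p_pos: "0 < p" and p_less_1: "p < 1"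
begin

sublocale prob_space "coin_space p"
  by (rule prob_space_coin_space)

abbreviation Y :: "bool stream \<Rightarrow> nat" where "Y \<equiv> waiting_time k"

definition pattern_prob :: real where "pattern_prob = (1 - p) * p ^ k"

lemma pattern_prob_pos: "0 < pattern_prob"
  using p_pos p_less_1 by (simp add: pattern_prob_def)

lemma pattern_prob_le_1: "pattern_prob \<le> 1"
  using p_pos p_less_1 by (simp add: pattern_prob_def mult_le_one power_le_one)

lemma prob_pattern: "prob {\<omega>. pattern_at k \<omega> (k + 1)} = pattern_prob"
  using emeasure_coin_space_pattern[of p k] p_pos p_less_1 pattern_prob_pos
  by (simp add: emeasure_eq_measure pattern_prob_def)

lemma prob_prefix_sdrop:
  assumes "Measurable.pred (coin_space p) P" "Measurable.pred (coin_space p) Q"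
    and "\<And>\<omega> \<omega>'. stake r \<omega> = stake r \<omega>' \<Longrightarrow> P \<omega> \<longleftrightarrow> P \<omega>'"
  shows "prob {\<omega>. P \<omega> \<and> Q (sdrop r \<omega>)} = prob {\<omega>. P \<omega>} * prob {\<omega>. Q \<omega>}"
  using emeasure_coin_space_prefix_sdrop[OF assms]
  by (simp add: emeasure_eq_measure ennreal_mult[symmetric])

lemma prob_no_pattern_in_blocks:
  "prob {\<omega>. \<forall>b<n. \<not> pattern_at k \<omega> ((b + 1) * (k + 1))} = (1 - pattern_prob) ^ n"
proof (induction n)
  case 0
  show ?case using prob_space by simp
next
  case (Suc n)
  have "pattern_at k \<omega> ((Suc b + 1) * (k + 1)) \<longleftrightarrow> pattern_at k (sdrop (k + 1) \<omega>) ((b + 1) * (k + 1))"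
    for \<omega> b by (subst pattern_at_sdrop) (simp_all add: algebra_simps)
  then have blocks: "{\<omega>. \<forall>b<Suc n. \<not> pattern_at k \<omega> ((b + 1) * (k + 1))}
      = {\<omega>. \<not> pattern_at k \<omega> (k + 1) \<and> (\<forall>b<n. \<not> pattern_at k (sdrop (k + 1) \<omega>) ((b + 1) * (k + 1)))}"
    by (simp add: All_less_Suc2)
  have "prob {\<omega>. \<forall>b<Suc n. \<not> pattern_at k \<omega> ((b + 1) * (k + 1))}
      = prob {\<omega>. \<not> pattern_at k \<omega> (k + 1)} * prob {\<omega>. \<forall>b<n. \<not> pattern_at k \<omega> ((b + 1) * (k + 1))}"
    unfolding blocks
  proof (rule prob_prefix_sdrop)
    show "\<And>\<omega> \<omega>'. stake (k + 1) \<omega> = stake (k + 1) \<omega>' \<Longrightarrow> \<not> pattern_at k \<omega> (k + 1) \<longleftrightarrow> \<not> pattern_at k \<omega>' (k + 1)"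
      by (meson pattern_at_stake_cong order_refl)
  qed measurable
  moreover have "prob {\<omega>. \<not> pattern_at k \<omega> (k + 1)} = 1 - pattern_prob"
  proof -
    have "{\<omega>. \<not> pattern_at k \<omega> (k + 1)} = space (coin_space p) - {\<omega>. pattern_at k \<omega> (k + 1)}"
      by auto
    then show ?thesis
      using prob_compl[OF sets_coin_space_Collect] prob_pattern by simp
  qed
  ultimately show ?case
    by (simp only: Suc.IH power_Suc)
qed

lemma AE_pattern_occurs: "AE \<omega> in coin_space p. \<exists>n. pattern_at k \<omega> n"
proof -
  let ?Z = "{\<omega>. \<forall>n. \<not> pattern_at k \<omega> n}"
  have Z_sets: "?Z \<in> events"
    by (intro sets_coin_space_Collect) measurable
  have "prob ?Z \<le> (1 - pattern_prob) ^ n" for n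
  proof -
    have "prob ?Z \<le> prob {\<omega>. \<forall>b<n. \<not> pattern_at k \<omega> ((b + 1) * (k + 1))}"
      by (intro finite_measure_mono sets_coin_space_Collect) (auto simp del: One_nat_def)
    then show ?thesis by (simp only: prob_no_pattern_in_blocks)
  qed
  moreover have "(\<lambda>n. (1 - pattern_prob) ^ n) \<longlonglongrightarrow> 0"
    using pattern_prob_pos pattern_prob_le_1 by (intro LIMSEQ_power_zero) simp
  ultimately have "prob ?Z \<le> 0"
    by (intro LIMSEQ_le_const) auto
  then have "prob ?Z = 0"
    using measure_nonneg[of "coin_space p" ?Z] by linarith
  with Z_sets have "?Z \<in> null_sets (coin_space p)"
    by (simp add: emeasure_eq_measure null_sets_def)
  then show ?thesis
    by (rule AE_I') auto
qed

lemma AE_waiting_time_gt: "AE \<omega> in coin_space p. k < Y \<omega>"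
  using AE_pattern_occurs by eventually_elim (auto intro: waiting_time_gt)

lemma emeasure_waiting_time_eq_shifted_pattern:
  "emeasure (coin_space p) {\<omega>. Y \<omega> = m + k + 1}
    = emeasure (coin_space p) {\<omega>. (\<forall>j\<le>m. \<not> pattern_at k \<omega> j) \<and> pattern_at k (sdrop m \<omega>) (k + 1)}"
proof (rule emeasure_eq_AE)
  show "AE \<omega> in coin_space p. \<omega> \<in> {\<omega>. Y \<omega> = m + k + 1}
      \<longleftrightarrow> \<omega> \<in> {\<omega>. (\<forall>j\<le>m. \<not> pattern_at k \<omega> j) \<and> pattern_at k (sdrop m \<omega>) (k + 1)}"
    using AE_pattern_occurs
  proof eventually_elim
    case (elim \<omega>)
    then obtain n where "pattern_at k \<omega> n" by blast
    from waiting_time_eq_iff[OF this, of m] show ?case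
      by (simp add: pattern_at_sdrop)
  qed
qed (intro sets_coin_space_Collect; measurable)+

lemma emeasure_less_waiting_time:
  "emeasure (coin_space p) {\<omega>. m < Y \<omega>} = emeasure (coin_space p) {\<omega>. \<forall>j\<le>m. \<not> pattern_at k \<omega> j}"
proof (rule emeasure_eq_AE)
  show "AE \<omega> in coin_space p. \<omega> \<in> {\<omega>. m < Y \<omega>} \<longleftrightarrow> \<omega> \<in> {\<omega>. \<forall>j\<le>m. \<not> pattern_at k \<omega> j}"
    using AE_pattern_occurs
  proof eventually_elim
    case (elim \<omega>)
    then obtain n where "pattern_at k \<omega> n" by blast
    from less_waiting_time_iff[OF this, of m] show ?case by simp
  qed
qed (intro sets_coin_space_Collect; measurable)+

lemma emeasure_waiting_time_eq:
  "emeasure (coin_space p) {\<omega>. Y \<omega> = m + k + 1} = pattern_prob * emeasure (coin_space p) {\<omega>. m < Y \<omega>}"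
proof -
  have "emeasure (coin_space p) {\<omega>. (\<forall>j\<le>m. \<not> pattern_at k \<omega> j) \<and> pattern_at k (sdrop m \<omega>) (k + 1)}
      = emeasure (coin_space p) {\<omega>. \<forall>j\<le>m. \<not> pattern_at k \<omega> j}
        * emeasure (coin_space p) {\<omega>. pattern_at k \<omega> (k + 1)}"
  proof (rule emeasure_coin_space_prefix_sdrop)
    show "\<And>\<omega> \<omega>'. stake m \<omega> = stake m \<omega>' \<Longrightarrow> (\<forall>j\<le>m. \<not> pattern_at k \<omega> j) \<longleftrightarrow> (\<forall>j\<le>m. \<not> pattern_at k \<omega>' j)"
      by (meson pattern_at_stake_cong)
  qed measurable
  then show ?thesis
    unfolding emeasure_waiting_time_eq_shifted_pattern emeasure_less_waiting_time
    using emeasure_coin_space_pattern[of p k] p_pos p_less_1 by (simp add: pattern_prob_def mult.commute)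
qed

lemma nn_integral_waiting_time:
  fixes g :: "nat \<Rightarrow> ennreal"
  shows "(\<integral>\<^sup>+\<omega>. g (Y \<omega>) \<partial>coin_space p)
    = pattern_prob * (\<integral>\<^sup>+\<omega>. (\<Sum>m<Y \<omega>. g (m + k + 1)) \<partial>coin_space p)"
proof -
  have early: "emeasure (coin_space p) {\<omega>. Y \<omega> = n} = 0" if "n < k + 1" for n
  proof -
    have "AE \<omega> in coin_space p. Y \<omega> \<noteq> n"
      using AE_waiting_time_gt by eventually_elim (use that in simp)
    then show ?thesis
      by (subst (asm) AE_iff_measurable[of "{\<omega>. Y \<omega> = n}"]) (auto intro: sets_coin_space_Collect)
  qed
  have "(\<integral>\<^sup>+\<omega>. g (Y \<omega>) \<partial>coin_space p) = (\<Sum>n. g n * emeasure (coin_space p) {\<omega>. Y \<omega> = n})"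
    using nn_integral_comp_nat_valued[OF measurable_waiting_time, where g=g] by simp
  also have "\<dots> = (\<Sum>m. g (m + k + 1) * emeasure (coin_space p) {\<omega>. Y \<omega> = m + k + 1})"
    by (subst suminf_offset[where i="k + 1"]) (simp_all add: early)
  also have "\<dots> = (\<Sum>m. pattern_prob * (g (m + k + 1) * emeasure (coin_space p) {\<omega>. m < Y \<omega>}))"
    by (simp only: emeasure_waiting_time_eq mult.left_commute)
  also have "\<dots> = pattern_prob * (\<Sum>m. g (m + k + 1) * emeasure (coin_space p) {\<omega>. m < Y \<omega>})"
    by simp
  also have "(\<Sum>m. g (m + k + 1) * emeasure (coin_space p) {\<omega>. m < Y \<omega>})
      = (\<integral>\<^sup>+\<omega>. (\<Sum>m<Y \<omega>. g (m + k + 1)) \<partial>coin_space p)"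
    using nn_integral_sum_lessThan_nat_valued[OF measurable_waiting_time, where g="\<lambda>m. g (m + k + 1)"] by simp
  finally show ?thesis .
qed

lemma nn_integral_waiting_time_power:
  "(\<integral>\<^sup>+\<omega>. of_nat ((Y \<omega> - k) ^ Suc j - (Y \<omega> - k - 1) ^ Suc j) \<partial>coin_space p)
    = pattern_prob * (\<integral>\<^sup>+\<omega>. of_nat (Y \<omega> ^ Suc j) \<partial>coin_space p)"
proof -
  have telescope_nat: "(\<Sum>m<n. (m + k + 1 - k) ^ Suc j - (m + k + 1 - k - 1) ^ Suc j) = n ^ Suc j" for n
    using sum_lessThan_Suc_power_diff[where n=n and j=j] by simp
  have telescope: "(\<Sum>m<n. of_nat ((m + k + 1 - k) ^ Suc j - (m + k + 1 - k - 1) ^ Suc j))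
      = (of_nat (n ^ Suc j) :: ennreal)" for n
    by (simp only: of_nat_sum[symmetric] telescope_nat)
  have "(\<integral>\<^sup>+\<omega>. of_nat ((Y \<omega> - k) ^ Suc j - (Y \<omega> - k - 1) ^ Suc j) \<partial>coin_space p)
      = pattern_prob * (\<integral>\<^sup>+\<omega>. (\<Sum>m<Y \<omega>. of_nat ((m + k + 1 - k) ^ Suc j - (m + k + 1 - k - 1) ^ Suc j)) \<partial>coin_space p)"
    by (rule nn_integral_waiting_time)
  then show ?thesis by (simp only: telescope)
qed

lemma nn_integral_waiting_time_power_finite: "(\<integral>\<^sup>+\<omega>. of_nat (Y \<omega> ^ j) \<partial>coin_space p) < \<infinity>"
proof (induction j)
  case 0
  show ?case using emeasure_space_1 by simp
next
  case (Suc j)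
  have "ennreal pattern_prob * (\<integral>\<^sup>+\<omega>. of_nat (Y \<omega> ^ Suc j) \<partial>coin_space p)
      = (\<integral>\<^sup>+\<omega>. of_nat ((Y \<omega> - k) ^ Suc j - (Y \<omega> - k - 1) ^ Suc j) \<partial>coin_space p)"
    by (rule nn_integral_waiting_time_power[symmetric])
  also have "\<dots> \<le> (\<integral>\<^sup>+\<omega>. of_nat (Suc j) * of_nat (Y \<omega> ^ j) \<partial>coin_space p)"
  proof (intro nn_integral_mono)
    fix \<omega>
    have "(Y \<omega> - k) ^ Suc j - (Y \<omega> - k - 1) ^ Suc j \<le> Suc j * (Y \<omega> - k) ^ j"
      using Suc_power_diff_le[of "Y \<omega> - k - 1" j] by (cases "Y \<omega> - k") simp_all
    also have "\<dots> \<le> Suc j * Y \<omega> ^ j"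
      by (intro mult_left_mono power_mono) simp_all
    finally show "of_nat ((Y \<omega> - k) ^ Suc j - (Y \<omega> - k - 1) ^ Suc j)
        \<le> (of_nat (Suc j) * of_nat (Y \<omega> ^ j) :: ennreal)"
      by (simp only: of_nat_le_iff of_nat_mult[symmetric])
  qed
  also have "\<dots> = of_nat (Suc j) * (\<integral>\<^sup>+\<omega>. of_nat (Y \<omega> ^ j) \<partial>coin_space p)"
    by (rule nn_integral_cmult) measurable
  also have "\<dots> < \<infinity>"
    using Suc.IH by (simp add: ennreal_mult_less_top of_nat_less_top)
  finally show ?case
    using pattern_prob_pos by (auto simp: ennreal_mult_less_top simp del: of_nat_power power_Suc)
qed

lemma integrable_waiting_time_power: "integrable (coin_space p) (\<lambda>\<omega>. real (Y \<omega>) ^ j)"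
proof (rule integrableI_nonneg)
  show "(\<integral>\<^sup>+\<omega>. ennreal (real (Y \<omega>) ^ j) \<partial>coin_space p) < \<infinity>"
    using nn_integral_waiting_time_power_finite[of j]
    by (simp only: of_nat_power[symmetric] ennreal_of_nat_eq_real_of_nat[symmetric])
qed auto

definition moment :: "nat \<Rightarrow> real" where
  "moment j = expectation (\<lambda>\<omega>. real (Y \<omega>) ^ j)"

lemma moment_Suc_eq_expectation:
  "pattern_prob * moment (Suc j)
    = expectation (\<lambda>\<omega>. (real (Y \<omega>) - real k) ^ Suc j - (real (Y \<omega>) - real k - 1) ^ Suc j)"
proof -
  have "expectation (\<lambda>\<omega>. real ((Y \<omega> - k) ^ Suc j - (Y \<omega> - k - 1) ^ Suc j))
      = enn2real (\<integral>\<^sup>+\<omega>. of_nat ((Y \<omega> - k) ^ Suc j - (Y \<omega> - k - 1) ^ Suc j) \<partial>coin_space p)"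
    by (subst integral_eq_nn_integral) (auto simp: ennreal_of_nat_eq_real_of_nat)
  also have "\<dots> = pattern_prob * enn2real (\<integral>\<^sup>+\<omega>. of_nat (Y \<omega> ^ Suc j) \<partial>coin_space p)"
    using pattern_prob_pos
    by (subst nn_integral_waiting_time_power) (simp add: enn2real_mult del: power_Suc of_nat_power)
  also have "enn2real (\<integral>\<^sup>+\<omega>. of_nat (Y \<omega> ^ Suc j) \<partial>coin_space p) = moment (Suc j)"
  proof -
    have "moment (Suc j) = enn2real (\<integral>\<^sup>+\<omega>. ennreal (real (Y \<omega>) ^ Suc j) \<partial>coin_space p)"
      unfolding moment_def by (rule integral_eq_nn_integral) auto
    then show ?thesis
      by (simp only: of_nat_power[symmetric] ennreal_of_nat_eq_real_of_nat[symmetric])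
  qed
  finally have "pattern_prob * moment (Suc j)
      = expectation (\<lambda>\<omega>. real ((Y \<omega> - k) ^ Suc j - (Y \<omega> - k - 1) ^ Suc j))" ..
  also have "\<dots> = expectation (\<lambda>\<omega>. (real (Y \<omega>) - real k) ^ Suc j - (real (Y \<omega>) - real k - 1) ^ Suc j)"
  proof (rule integral_cong_AE)
    show "AE \<omega> in coin_space p. real ((Y \<omega> - k) ^ Suc j - (Y \<omega> - k - 1) ^ Suc j)
        = (real (Y \<omega>) - real k) ^ Suc j - (real (Y \<omega>) - real k - 1) ^ Suc j"
      using AE_waiting_time_gt
    proof eventually_elim
      case (elim \<omega>)
      have "(Y \<omega> - k - 1) ^ Suc j \<le> (Y \<omega> - k) ^ Suc j" by (rule power_mono) simp_all
      moreover have "real (Y \<omega> - k) = real (Y \<omega>) - real k" "real (Y \<omega> - k - 1) = real (Y \<omega>) - real k - 1"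
        using elim by (simp_all add: of_nat_diff)
      ultimately show ?case by (simp only: of_nat_diff of_nat_power)
    qed
  qed (rule measurable_compose[OF measurable_waiting_time], simp)+
  finally show ?thesis .
qed

lemma moment_recurrence:
  "pattern_prob * moment (Suc j) = (\<Sum>i<Suc j. of_nat (Suc j choose i)
      * ((- real k) ^ (Suc j - i) - (- real k - 1) ^ (Suc j - i)) * moment i)"
proof -
  have "pattern_prob * moment (Suc j) = expectation (\<lambda>\<omega>. \<Sum>i<Suc j. of_nat (Suc j choose i)
      * ((- real k) ^ (Suc j - i) - (- real k - 1) ^ (Suc j - i)) * real (Y \<omega>) ^ i)"
    by (simp only: moment_Suc_eq_expectation power_diff_binomial)
  also have "\<dots> = (\<Sum>i<Suc j. of_nat (Suc j choose i)
      * ((- real k) ^ (Suc j - i) - (- real k - 1) ^ (Suc j - i)) * moment i)"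
    unfolding moment_def
    by (subst Bochner_Integration.integral_sum) (simp_all add: integrable_waiting_time_power del: power_Suc)
  finally show ?thesis .
qed

lemma moment_0: "moment 0 = 1"
  using prob_space by (simp add: moment_def)

lemma moment_1: "moment 1 = 1 / pattern_prob"
proof -
  have "pattern_prob * moment 1 = 1"
    using moment_recurrence[of 0] by (simp add: moment_0)
  then show ?thesis using pattern_prob_pos by (simp add: field_simps)
qed

lemma moment_2: "moment 2 = 2 / pattern_prob ^ 2 - (2 * real k + 1) / pattern_prob"
proof -
  have "pattern_prob * moment 2 = 2 * moment 1 - (2 * real k + 1)"
    using moment_recurrence[of 1] by (simp add: moment_0 numeral_eq_Suc algebra_simps)
  then show ?thesis
    unfolding moment_1 using pattern_prob_pos by (simp add: field_simps power2_eq_square)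
qed

lemma moment_3:
  "moment 3 = 6 / pattern_prob ^ 3 - (12 * real k + 6) / pattern_prob ^ 2
    + (3 * real k ^ 2 + 3 * real k + 1) / pattern_prob"
proof -
  have "pattern_prob * moment 3
      = 3 * moment 2 - (6 * real k + 3) * moment 1 + (3 * real k ^ 2 + 3 * real k + 1)"
    using moment_recurrence[of 2] by (simp add: moment_0 numeral_eq_Suc algebra_simps)
  then have "moment 3
      = (3 * moment 2 - (6 * real k + 3) * moment 1 + (3 * real k ^ 2 + 3 * real k + 1)) / pattern_prob"
    using pattern_prob_pos by (simp add: field_simps)
  then show ?thesis
    unfolding moment_1 moment_2 using pattern_prob_pos by (simp add: field_simps) algebra
qed

lemma moment_4:
  "moment 4 = 24 / pattern_prob ^ 4 - (72 * real k + 36) / pattern_prob ^ 3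
    + (48 * real k ^ 2 + 48 * real k + 14) / pattern_prob ^ 2
    - (4 * real k ^ 3 + 6 * real k ^ 2 + 4 * real k + 1) / pattern_prob"
proof -
  have "pattern_prob * moment 4
      = 4 * moment 3 - (12 * real k + 6) * moment 2 + (12 * real k ^ 2 + 12 * real k + 4) * moment 1
        - (4 * real k ^ 3 + 6 * real k ^ 2 + 4 * real k + 1)"
    using moment_recurrence[of 3] by (simp add: moment_0 numeral_eq_Suc algebra_simps)
  then have "moment 4
      = (4 * moment 3 - (12 * real k + 6) * moment 2 + (12 * real k ^ 2 + 12 * real k + 4) * moment 1
        - (4 * real k ^ 3 + 6 * real k ^ 2 + 4 * real k + 1)) / pattern_prob"
    using pattern_prob_pos by (simp add: field_simps)
  then show ?thesis
    unfolding moment_1 moment_2 moment_3 using pattern_prob_pos by (simp add: field_simps) algebra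
qed

lemma moment_5:
  "moment 5 = 120 / pattern_prob ^ 5 - 240 * (2 * real k + 1) / pattern_prob ^ 4
    + 30 * (18 * real k ^ 2 + 18 * real k + 5) / pattern_prob ^ 3
    - 10 * (16 * real k ^ 3 + 24 * real k ^ 2 + 14 * real k + 3) / pattern_prob ^ 2
    + ((real k + 1) ^ 5 - real k ^ 5) / pattern_prob"
proof -
  have "pattern_prob * moment 5
      = 5 * moment 4 - (20 * real k + 10) * moment 3 + (30 * real k ^ 2 + 30 * real k + 10) * moment 2
        - (20 * real k ^ 3 + 30 * real k ^ 2 + 20 * real k + 5) * moment 1
        + (5 * real k ^ 4 + 10 * real k ^ 3 + 10 * real k ^ 2 + 5 * real k + 1)"
    using moment_recurrence[of 4] by (simp add: moment_0 numeral_eq_Suc algebra_simps)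
  then have "moment 5
      = (5 * moment 4 - (20 * real k + 10) * moment 3 + (30 * real k ^ 2 + 30 * real k + 10) * moment 2
        - (20 * real k ^ 3 + 30 * real k ^ 2 + 20 * real k + 5) * moment 1
        + (5 * real k ^ 4 + 10 * real k ^ 3 + 10 * real k ^ 2 + 5 * real k + 1)) / pattern_prob"
    using pattern_prob_pos by (simp add: field_simps)
  then show ?thesis
    unfolding moment_1 moment_2 moment_3 moment_4 using pattern_prob_pos by (simp add: field_simps) algebra
qed

lemma has_bochner_integral_moment: "has_bochner_integral (coin_space p) (\<lambda>\<omega>. real (Y \<omega>) ^ j) (moment j)"
  unfolding moment_def by (rule has_bochner_integral_integrable[OF integrable_waiting_time_power])

end

theorem corollary3p5:
  fixes p :: real and k :: nat
  assumes "0 < p" and "p < 1" and "1 \<le> k"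
  defines "Y \<equiv> waiting_time k"
  shows "(has_bochner_integral (coin_space p) (\<lambda>\<omega>. real (Y \<omega>)) (1 / ((1 - p) * p ^ k))) \<and>
    (has_bochner_integral (coin_space p) (\<lambda>\<omega>. real (Y \<omega>) ^ 2)
           (2 / ((1 - p) ^ 2 * p ^ (2 * k)) - (2 * real k + 1) / ((1 - p) * p ^ k))) \<and>
    (has_bochner_integral (coin_space p) (\<lambda>\<omega>. real (Y \<omega>) ^ 3)
           (6 / ((1 - p) ^ 3 * p ^ (3 * k)) - (12 * real k + 6) / ((1 - p) ^ 2 * p ^ (2 * k))
            + (3 * real k ^ 2 + 3 * real k + 1) / ((1 - p) * p ^ k))) \<and>
    (has_bochner_integral (coin_space p) (\<lambda>\<omega>. real (Y \<omega>) ^ 4)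
           (24 / ((1 - p) ^ 4 * p ^ (4 * k)) - (72 * real k + 36) / ((1 - p) ^ 3 * p ^ (3 * k))
            + (48 * real k ^ 2 + 48 * real k + 14) / ((1 - p) ^ 2 * p ^ (2 * k))
            - (4 * real k ^ 3 + 6 * real k ^ 2 + 4 * real k + 1) / ((1 - p) * p ^ k))) \<and>
    (has_bochner_integral (coin_space p) (\<lambda>\<omega>. real (Y \<omega>) ^ 5)
           (120 / ((1 - p) ^ 5 * p ^ (5 * k)) - 240 * (2 * real k + 1) / ((1 - p) ^ 4 * p ^ (4 * k))
            + 30 * (18 * real k ^ 2 + 18 * real k + 5) / ((1 - p) ^ 3 * p ^ (3 * k))
            - 10 * (16 * real k ^ 3 + 24 * real k ^ 2 + 14 * real k + 3) / ((1 - p) ^ 2 * p ^ (2 * k))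
            + ((real k + 1) ^ 5 - real k ^ 5) / ((1 - p) * p ^ k)))"
proof -
  interpret HkT_waiting_time p k
    using assms(1,2) by unfold_locales
  have q: "(1 - p) * p ^ k = pattern_prob"
    by (simp add: pattern_prob_def)
  have q_power: "(1 - p) ^ n * p ^ (n * k) = pattern_prob ^ n" for n
    by (simp add: pattern_prob_def power_mult_distrib power_mult mult.commute[of n k])
  show ?thesis
    unfolding Y_def q q_power
    using has_bochner_integral_moment[of 1, unfolded moment_1] has_bochner_integral_moment[of 2, unfolded moment_2]
      has_bochner_integral_moment[of 3, unfolded moment_3] has_bochner_integral_moment[of 4, unfolded moment_4]
      has_bochner_integral_moment[of 5, unfolded moment_5]
    by simp
qed

end
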